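(* Let $B$ be a finite supersoluble brace, and let $p$ be the smallest prime dividing $|B|$. If $C$ is a subbrace of $B$ with $|B:C|=p$, then $C$ is an ideal of $B$.
   Context: A brace (skew left brace) is a set $B$ with two binary operations $+$ and $\cdot$ such that $(B,+)$ and $(B,\cdot)$ are groups and $a(b+c)=ab-a+ac$ for all $a,b,c\in B$. A subbrace is a subset that is a subgroup of both groups. $\lambda_a(b)=-a+ab$ defines a homomorphism $\lambda\colon(B,\cdot)\to\operatorname{Aut}(B,+)$. An ideal is a subbrace normal in both groups and invariant under all $\lambda_b$; quotients by ideals are braces. $\operatorname{Soc}(B)=\operatorname{Ker}\lambda\cap Z(B,+)$. $B$ is supersoluble if there is a finite chain of ideals $\{0\}=I_0\le\dots\le I_n=B$ such that for each $i$, either $(I_{i+1}/I_i,+)$ is infinite cyclic and $I_{i+1}/I_i\le\operatorname{Soc}(B/I_i)$, or $I_{i+1}/I_i$ has prime order. For a subbrace $C$ of a finite brace, $|B:C|=|B|/|C|$. (The paper phrases $p$ as the smallest prime in $\pi(B,+)$, the set of primes that are orders of elements of $(B,+)$.) *)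

theory Defs
  imports "HOL-Algebra.Algebra"
begin

text \<open>A (skew left) brace is given by two group structures A (the additive group (B,+))
 and M (the multiplicative group (B,.)) on the same carrier B, with
 a(b+c) = ab - a + ac.\<close>

definition brace :: "'a monoid \<Rightarrow> 'a monoid \<Rightarrow> bool" where
  "brace A M \<longleftrightarrow> group A \<and> group M \<and> carrier A = carrier M \<and>
     (\<forall>a\<in>carrier A. \<forall>b\<in>carrier A. \<forall>c\<in>carrier A.
        a \<otimes>\<^bsub>M\<^esub> (b \<otimes>\<^bsub>A\<^esub> c) =
          ((a \<otimes>\<^bsub>M\<^esub> b) \<otimes>\<^bsub>A\<^esub> inv\<^bsub>A\<^esub> a) \<otimes>\<^bsub>A\<^esub> (a \<otimes>\<^bsub>M\<^esub> c))"

definition brace_lambda :: "'a monoid \<Rightarrow> 'a monoid \<Rightarrow> 'a \<Rightarrow> 'a \<Rightarrow> 'a" where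
  "brace_lambda A M a b = inv\<^bsub>A\<^esub> a \<otimes>\<^bsub>A\<^esub> (a \<otimes>\<^bsub>M\<^esub> b)"

definition subbrace :: "'a monoid \<Rightarrow> 'a monoid \<Rightarrow> 'a set \<Rightarrow> bool" where
  "subbrace A M C \<longleftrightarrow> subgroup C A \<and> subgroup C M"

definition brace_ideal :: "'a monoid \<Rightarrow> 'a monoid \<Rightarrow> 'a set \<Rightarrow> bool" where
  "brace_ideal A M I \<longleftrightarrow> subbrace A M I \<and> normal I A \<and> normal I M \<and>
     (\<forall>b\<in>carrier M. \<forall>x\<in>I. brace_lambda A M b x \<in> I)"

definition brace_socle :: "'a monoid \<Rightarrow> 'a monoid \<Rightarrow> 'a set" where
  "brace_socle A M = {a \<in> carrier A.
      (\<forall>b\<in>carrier A. brace_lambda A M a b = b) \<and>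
      (\<forall>b\<in>carrier A. a \<otimes>\<^bsub>A\<^esub> b = b \<otimes>\<^bsub>A\<^esub> a)}"

text \<open>The quotient brace B/I is (A Mod I, M Mod I) (for an ideal I the additive
 and multiplicative cosets coincide). The factor I_{i+1}/I_i as a subset of B/I_i:\<close>
definition brace_factor :: "'a monoid \<Rightarrow> 'a set \<Rightarrow> 'a set \<Rightarrow> 'a set set" where
  "brace_factor A J I = (\<lambda>x. I #>\<^bsub>A\<^esub> x) ` J"

definition infinite_cyclic_in :: "('b, 'c) monoid_scheme \<Rightarrow> 'b set \<Rightarrow> bool" where
  "infinite_cyclic_in G H \<longleftrightarrow> infinite H \<and> (\<exists>g\<in>H. H = generate G {g})"

definition supersoluble_brace :: "'a monoid \<Rightarrow> 'a monoid \<Rightarrow> bool" where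
  "supersoluble_brace A M \<longleftrightarrow> brace A M \<and>
     (\<exists>(I :: nat \<Rightarrow> 'a set) n.
        I 0 = {\<one>\<^bsub>A\<^esub>} \<and> I n = carrier A \<and>
        (\<forall>i\<le>n. brace_ideal A M (I i)) \<and>
        (\<forall>i<n. I i \<subseteq> I (Suc i) \<and>
           ((infinite_cyclic_in (A Mod (I i)) (brace_factor A (I (Suc i)) (I i)) \<and>
             brace_factor A (I (Suc i)) (I i) \<subseteq> brace_socle (A Mod (I i)) (M Mod (I i)))
            \<or> Factorial_Ring.prime (card (brace_factor A (I (Suc i)) (I i))))))"

end

(*
  Pick consecutive ideals K <= J of the supersoluble series with K inside C but J not inside C.
  As J/K has prime order, J \<inter> C = K, so |J/K| = |J : J \<inter> C| <= |B : C| = p.  An automorphism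
  of J preserving K whose order has no prime factor below p permutes the fewer than p cosets of K
  in J other than K in orbits of length dividing its order, hence fixes every coset of K in J.
  This applies to conjugations in (B,+) and (B,\<cdot>) and to every lambda_b.  Since J is normal and
  C has prime index, J C = B in both groups; conjugating C by elements of J only multiplies by
  elements of K, which lie in C, so C is normal in both groups, and the same argument for lambda
  shows that C is lambda-invariant.
*)

theory Submission
  imports Defs
begin

lemma periodic_point_fixed:
  fixes f :: "'b \<Rightarrow> 'b"
  assumes "finite Y" and "card Y < p" and "f ` Y \<subseteq> Y" and "y \<in> Y"
    and "(f ^^ m) y = y" and "0 < m"
    and p_min: "\<And>q. Factorial_Ring.prime q \<Longrightarrow> q dvd m \<Longrightarrow> p \<le> q"
  shows "f y = y"
proof -
  define d where "d = (LEAST d. 0 < d \<and> (f ^^ d) y = y)"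
  have d: "0 < d" "(f ^^ d) y = y"
    using LeastI[of "\<lambda>d. 0 < d \<and> (f ^^ d) y = y", OF conjI[OF assms(6,5)]] by (simp_all add: d_def)
  have d_least: "d \<le> e" if "0 < e" "(f ^^ e) y = y" for e
    unfolding d_def using that by (intro Least_le) simp
  have "(f ^^ (m mod d)) y = y"
    using funpow_mod_eq[where f=f and n=d and x=y and m=m] d assms(5) by simp
  then have "d dvd m"
    using d_least[of "m mod d"] mod_less_divisor[OF d(1), of m] by (auto simp: dvd_eq_mod_eq_0)
  have "inj_on (\<lambda>i. (f ^^ i) y) {..<d}"
  proof (rule linorder_inj_onI', rule notI)
    fix i j assume "i \<in> {..<d}" "j \<in> {..<d}" "i < j" "(f ^^ i) y = (f ^^ j) y"
    then have "(f ^^ (d - j + i)) y = (f ^^ (d - j)) ((f ^^ j) y)"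
      by (simp only: funpow_add comp_apply)
    also have "\<dots> = (f ^^ (d - j + j)) y" by (simp only: funpow_add comp_apply)
    finally have "(f ^^ (d - j + i)) y = y" using \<open>j \<in> {..<d}\<close> d by simp
    then show False using d_least[of "d - j + i"] \<open>i < j\<close> \<open>j \<in> {..<d}\<close> by simp
  qed
  moreover have "(\<lambda>i. (f ^^ i) y) ` {..<d} \<subseteq> Y"
  proof -
    have "(f ^^ i) y \<in> Y" for i by (induction i) (use assms(3,4) in auto)
    then show ?thesis by blast
  qed
  ultimately have "card {..<d} \<le> card Y"
    by (rule card_inj_on_le[OF _ _ assms(1)])
  then have "d < p" using assms(2) by simp
  have "d = 1"
  proof (rule ccontr)
    assume "d \<noteq> 1"
    then obtain q where "Factorial_Ring.prime q" "q dvd d" using prime_factor_nat by blast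
    then have "p \<le> q" "q \<le> d"
      using p_min dvd_trans[OF _ \<open>d dvd m\<close>] dvd_imp_le[OF _ d(1)] by blast+
    then show False using \<open>d < p\<close> by simp
  qed
  then show ?thesis using d by simp
qed

lemma inj_on_if_funpow_eq_id:
  assumes "\<And>x. x \<in> A \<Longrightarrow> (f ^^ m) x = x" and "0 < m"
  shows "inj_on f A"
proof (rule inj_onI)
  fix x y assume "x \<in> A" "y \<in> A" "f x = f y"
  have "(f ^^ m) x = (f ^^ (m - 1)) (f x)" and "(f ^^ m) y = (f ^^ (m - 1)) (f y)"
    using \<open>0 < m\<close> by (cases m; simp add: funpow_Suc_right del: funpow.simps)+
  then show "x = y" using assms(1) \<open>x \<in> A\<close> \<open>y \<in> A\<close> \<open>f x = f y\<close> by metis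
qed

lemma periodic_map_with_fixed_point_is_id:
  fixes f :: "'b \<Rightarrow> 'b"
  assumes "finite Y" and "card Y \<le> p" and f_Y: "f ` Y \<subseteq> Y" and "z \<in> Y" and "f z = z"
    and period: "\<And>y. y \<in> Y \<Longrightarrow> (f ^^ m) y = y" and "0 < m"
    and p_min: "\<And>q. Factorial_Ring.prime q \<Longrightarrow> q dvd m \<Longrightarrow> p \<le> q"
    and "y \<in> Y"
  shows "f y = y"
proof (cases "y = z")
  case True then show ?thesis using \<open>f z = z\<close> by simp
next
  case False
  have "inj_on f Y" using inj_on_if_funpow_eq_id[OF period \<open>0 < m\<close>] .
  then have "f ` (Y - {z}) \<subseteq> Y - {z}"
    using f_Y \<open>z \<in> Y\<close> \<open>f z = z\<close> by (auto dest: inj_onD)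
  moreover have "card (Y - {z}) < p"
    using \<open>finite Y\<close> \<open>z \<in> Y\<close> \<open>card Y \<le> p\<close> card_Diff1_less[of Y z] by simp
  ultimately show ?thesis
    using periodic_point_fixed[of "Y - {z}" p f y m] \<open>finite Y\<close> \<open>y \<in> Y\<close> False
      period \<open>0 < m\<close> p_min by blast
qed

lemma (in group) card_rcosets_within:
  assumes "subgroup H G" and "subgroup K G" and "H \<subseteq> K"
  shows "card ((\<lambda>x. H #> x) ` K) * card H = card K"
proof -
  interpret K: group "G\<lparr>carrier := K\<rparr>" using subgroup_imp_group[OF assms(2)] .
  have "card (rcosets\<^bsub>G\<lparr>carrier := K\<rparr>\<^esub> H) * card H = order (G\<lparr>carrier := K\<rparr>)"
    by (rule K.lagrange[OF subgroup_incl[OF assms]])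
  moreover have "rcosets\<^bsub>G\<lparr>carrier := K\<rparr>\<^esub> H = (\<lambda>x. H #> x) ` K"
    unfolding RCOSETS_def r_coset_def by auto
  ultimately show ?thesis by (simp add: order_def)
qed

lemma (in group) rcos_Int_subgroup:
  assumes C: "subgroup C G" and J: "subgroup J G" and j: "j \<in> J"
  shows "(C #> j) \<inter> J = (J \<inter> C) #> j"
proof
  show "(C #> j) \<inter> J \<subseteq> (J \<inter> C) #> j"
  proof
    fix z assume "z \<in> (C #> j) \<inter> J"
    then obtain c where c: "c \<in> C" "z = c \<otimes> j" "c \<otimes> j \<in> J" unfolding r_coset_def by blast
    have "c = (c \<otimes> j) \<otimes> inv j"
      using c(1) j subgroup.mem_carrier[OF C] subgroup.mem_carrier[OF J] by (simp add: m_assoc)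
    then have "c \<in> J" using c(3) j J by (metis subgroup.m_closed subgroup.m_inv_closed)
    then show "z \<in> (J \<inter> C) #> j" using c unfolding r_coset_def by blast
  qed
qed (use J j in \<open>auto simp: r_coset_def subgroup.m_closed\<close>)

lemma (in group) card_rcosets_Int_le:
  assumes "finite (carrier G)" and C: "subgroup C G" and J: "subgroup J G"
  shows "card ((\<lambda>x. (J \<inter> C) #> x) ` J) \<le> card (rcosets C)"
proof -
  have "(\<lambda>x. (J \<inter> C) #> x) ` J = (\<lambda>T. T \<inter> J) ` (\<lambda>x. C #> x) ` J"
    using rcos_Int_subgroup[OF C J] by (auto simp: image_image)
  also have "card \<dots> \<le> card ((\<lambda>x. C #> x) ` J)"
    by (rule card_image_le) (use assms(1) J finite_subset subgroup.subset in blast)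
  also have "\<dots> \<le> card (rcosets C)"
    using assms(1) by (intro card_mono) (auto simp: RCOSETS_def dest: subgroup.mem_carrier[OF J])
  finally show ?thesis .
qed

lemma (in group) prime_index_no_intermediate_subgroup:
  assumes fin: "finite (carrier G)"
    and H: "subgroup H G" and K: "subgroup K G" and L: "subgroup L G"
    and "H \<subseteq> K" and "K \<subseteq> L"
    and prime: "Factorial_Ring.prime (card ((\<lambda>x. H #> x) ` L))"
  shows "K = H \<or> K = L"
proof -
  have "card ((\<lambda>x. H #> x) ` L) * card H = card L"
    using card_rcosets_within[OF H L] assms(5,6) by blast
  moreover have HK: "card ((\<lambda>x. H #> x) ` K) * card H = card K"
    using card_rcosets_within[OF H K \<open>H \<subseteq> K\<close>] .
  moreover have KL: "card ((\<lambda>x. K #> x) ` L) * card K = card L"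
    using card_rcosets_within[OF K L \<open>K \<subseteq> L\<close>] .
  moreover have "card H > 0" using subgroup.finite_imp_card_positive[OF H fin] .
  ultimately have "card ((\<lambda>x. H #> x) ` L)
      = card ((\<lambda>x. K #> x) ` L) * card ((\<lambda>x. H #> x) ` K)"
    by (metis mult.assoc mult_right_cancel less_irrefl)
  then consider "card ((\<lambda>x. H #> x) ` K) = 1" | "card ((\<lambda>x. K #> x) ` L) = 1"
    using prime prime_product by metis
  moreover have "finite L" using fin L subgroup.subset finite_subset by blast
  ultimately show ?thesis
    using HK KL card_subset_eq[of K H] card_subset_eq[of L K] assms(5,6)
    by (metis finite_subset mult_1)
qed

lemma (in group) card_prime_factor_le_index:
  assumes fin: "finite (carrier G)"
    and J: "subgroup J G" and K: "subgroup K G" and C: "subgroup C G"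
    and "K \<subseteq> J" and "K \<subseteq> C" and "\<not> J \<subseteq> C"
    and prime: "Factorial_Ring.prime (card ((\<lambda>x. K #> x) ` J))"
    and index: "card (carrier G) = p * card C"
  shows "card ((\<lambda>x. K #> x) ` J) \<le> p"
proof -
  have "J \<inter> C = K"
    using prime_index_no_intermediate_subgroup[OF fin K subgroups_Inter_pair[OF J C] J] assms
    by blast
  then have "card ((\<lambda>x. K #> x) ` J) \<le> card (rcosets C)"
    using card_rcosets_Int_le[OF fin C J] by simp
  also have "card (rcosets C) = p"
    using lagrange[OF C] index subgroup.finite_imp_card_positive[OF C fin] by (simp add: order_def)
  finally show ?thesis .
qed

lemma (in group) endo_fixes_rcosets:
  fixes \<sigma> :: "'a \<Rightarrow> 'a" and m p :: nat
  assumes fin: "finite (carrier G)"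
    and J: "subgroup J G" and K: "subgroup K G" and "K \<subseteq> J"
    and \<sigma>_J: "\<sigma> ` J \<subseteq> J" and \<sigma>_K: "\<sigma> ` K \<subseteq> K"
    and \<sigma>_hom: "\<And>x y. x \<in> J \<Longrightarrow> y \<in> J \<Longrightarrow> \<sigma> (x \<otimes> y) = \<sigma> x \<otimes> \<sigma> y"
    and period: "\<And>x. x \<in> J \<Longrightarrow> (\<sigma> ^^ m) x = x" and "0 < m"
    and p_min: "\<And>q. Factorial_Ring.prime q \<Longrightarrow> q dvd m \<Longrightarrow> p \<le> q"
    and card_le: "card ((\<lambda>x. K #> x) ` J) \<le> p"
    and x: "x \<in> J"
  shows "\<sigma> x \<in> K #> x"
proof -
  have K_carrier: "K \<subseteq> carrier G" and J_carrier: "J \<subseteq> carrier G"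
    using J K subgroup.subset by auto
  have "inj_on \<sigma> K"
    using inj_on_if_funpow_eq_id[OF period \<open>0 < m\<close>] inj_on_subset \<open>K \<subseteq> J\<close> by blast
  then have "\<sigma> ` K = K"
    using endo_inj_surj[OF finite_subset[OF K_carrier fin] \<sigma>_K] by blast
  have rcos_image: "H #> a = (\<lambda>h. h \<otimes> a) ` H" for H a
    unfolding r_coset_def by auto
  have image_rcos: "\<sigma> ` (K #> y) = K #> \<sigma> y" if "y \<in> J" for y
  proof -
    have "\<sigma> ` (K #> y) = (\<lambda>k. \<sigma> k \<otimes> \<sigma> y) ` K"
      using that \<sigma>_hom \<open>K \<subseteq> J\<close> by (auto simp: rcos_image image_image intro!: image_cong)
    also have "\<dots> = K #> \<sigma> y"
      unfolding rcos_image[of K] by (subst \<open>\<sigma> ` K = K\<close>[symmetric]) (simp add: image_image)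
    finally show ?thesis .
  qed
  have funpow_image: "((\<lambda>S. \<sigma> ` S) ^^ n) S = (\<sigma> ^^ n) ` S" for n S
    by (induction n) (auto simp: image_image)
  have "(\<lambda>S. \<sigma> ` S) (K #> x) = K #> x"
  proof (rule periodic_map_with_fixed_point_is_id[where Y = "(\<lambda>x. K #> x) ` J" and z = K])
    show "finite ((\<lambda>x. K #> x) ` J)"
      using fin J_carrier finite_subset by blast
    show "(\<lambda>S. \<sigma> ` S) ` (\<lambda>x. K #> x) ` J \<subseteq> (\<lambda>x. K #> x) ` J"
      using image_rcos \<sigma>_J by auto
    show "K \<in> (\<lambda>x. K #> x) ` J"
      using coset_mult_one[OF K_carrier] subgroup.one_closed[OF J] by (metis image_eqI)
    show "((\<lambda>S. \<sigma> ` S) ^^ m) S = S" if S: "S \<in> (\<lambda>x. K #> x) ` J" for S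
    proof -
      obtain y where "y \<in> J" "S = K #> y" using S by blast
      then have "S \<subseteq> J" using J \<open>K \<subseteq> J\<close> by (auto simp: r_coset_def subgroup.m_closed)
      then have "(\<sigma> ^^ m) ` S = S" using period by (simp add: subset_iff)
      then show ?thesis by (simp add: funpow_image)
    qed
  qed (use \<open>\<sigma> ` K = K\<close> card_le \<open>0 < m\<close> p_min x in auto)
  then have "K #> \<sigma> x = K #> x" using image_rcos x by simp
  then show ?thesis
    using rcos_self[OF _ K] \<sigma>_J x J_carrier by blast
qed

lemma (in group) normal_mult_eq_carrier_of_prime_index:
  assumes "finite (carrier G)" and "Factorial_Ring.prime p"
    and C: "subgroup C G" and "card (carrier G) = p * card C"
    and "J \<lhd> G" and "\<not> J \<subseteq> C"
  shows "J <#> C = carrier G"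
proof -
  interpret second_isomorphism_grp J G C
    using assms by (simp add: second_isomorphism_grp_def second_isomorphism_grp_axioms_def)
  have "card ((\<lambda>x. C #> x) ` carrier G) * card C = p * card C"
    using card_rcosets_within[OF C subgroup_self subgroup.subset[OF C]] assms(4) by simp
  then have "Factorial_Ring.prime (card ((\<lambda>x. C #> x) ` carrier G))"
    using subgroup.finite_imp_card_positive[OF C assms(1)] assms(2) by simp
  then have "J <#> C = C \<or> J <#> C = carrier G"
    using prime_index_no_intermediate_subgroup[OF assms(1) C normal_set_mult_subgroup subgroup_self]
      S_contained_in_set_mult setmult_subset_G[OF subset subgroup.subset[OF C]] by blast
  then show ?thesis using H_contained_in_set_mult \<open>\<not> J \<subseteq> C\<close> by blast
qed

lemma (in group) conj_funpow:
  assumes b: "b \<in> carrier G" and x: "x \<in> carrier G"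
  shows "((\<lambda>z. inv b \<otimes> z \<otimes> b) ^^ n) x = inv (b [^] n) \<otimes> x \<otimes> b [^] n"
proof (induction n)
  case (Suc n)
  then show ?case
    using b x by (simp add: nat_pow_Suc2 inv_mult_group m_assoc)
qed (use x in simp)

lemma (in group) conj_fixes_rcosets:
  assumes fin: "finite (carrier G)"
    and J: "J \<lhd> G" and K: "K \<lhd> G" and "K \<subseteq> J"
    and p_min: "\<And>q. Factorial_Ring.prime q \<Longrightarrow> q dvd order G \<Longrightarrow> p \<le> q"
    and card_le: "card ((\<lambda>x. K #> x) ` J) \<le> p"
    and b: "b \<in> carrier G" and x: "x \<in> J"
  shows "inv b \<otimes> x \<otimes> b \<in> K #> x"
proof (rule endo_fixes_rcosets[OF fin _ _ \<open>K \<subseteq> J\<close> _ _ _ _ _ p_min card_le x])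
  show "subgroup J G" "subgroup K G" using J K normal_imp_subgroup by auto
  then have J_carrier: "J \<subseteq> carrier G" using subgroup.subset by blast
  show "(\<lambda>z. inv b \<otimes> z \<otimes> b) ` J \<subseteq> J" "(\<lambda>z. inv b \<otimes> z \<otimes> b) ` K \<subseteq> K"
    using normal.inv_op_closed1[OF J b] normal.inv_op_closed1[OF K b] by auto
  show "inv b \<otimes> (y \<otimes> z) \<otimes> b = inv b \<otimes> y \<otimes> b \<otimes> (inv b \<otimes> z \<otimes> b)" if "y \<in> J" "z \<in> J" for y z
  proof -
    have "y \<in> carrier G" "z \<in> carrier G" using that J_carrier by auto
    then show ?thesis using b by (simp add: m_assoc) (simp add: m_assoc[symmetric])
  qed
  show "((\<lambda>z. inv b \<otimes> z \<otimes> b) ^^ order G) y = y" if "y \<in> J" for y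
    using that J_carrier b conj_funpow pow_order_eq_1 by (simp add: subsetD)
  show "0 < order G" using fin by (simp add: order_gt_0_iff_finite)
qed

lemma (in group) normal_if_conj_fixes_rcosets:
  assumes C: "subgroup C G" and J: "subgroup J G" and "K \<subseteq> C"
    and JC: "J <#> C = carrier G"
    and conj: "\<And>y h. y \<in> J \<Longrightarrow> h \<in> C \<Longrightarrow> inv h \<otimes> y \<otimes> h \<in> K #> y"
  shows "C \<lhd> G"
proof -
  have C_carrier: "C \<subseteq> carrier G" and J_carrier: "J \<subseteq> carrier G"
    using C J subgroup.subset by auto
  have J_conj: "j \<otimes> h \<otimes> inv j \<in> C" if j: "j \<in> J" and h: "h \<in> C" for j h
  proof -
    obtain k where k: "k \<in> K" "inv h \<otimes> j \<otimes> h = k \<otimes> j"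
      using conj[OF j h] unfolding r_coset_def by blast
    have carrier: "j \<in> carrier G" "h \<in> carrier G" "k \<in> carrier G"
      using j h k(1) J_carrier C_carrier \<open>K \<subseteq> C\<close> by auto
    then have "j \<otimes> h \<otimes> inv j = h \<otimes> (inv h \<otimes> j \<otimes> h) \<otimes> inv j"
      by (simp add: m_assoc[symmetric])
    also have "\<dots> = h \<otimes> k"
      using k carrier by (simp add: m_assoc)
    finally show ?thesis
      using subgroup.m_closed[OF C h] k(1) \<open>K \<subseteq> C\<close> by auto
  qed
  show ?thesis
  proof (rule normal_inv_iff[THEN iffD2], intro conjI C ballI)
    fix x h assume "x \<in> carrier G" and h: "h \<in> C"
    then obtain j c where jc: "j \<in> J" "c \<in> C" "x = j \<otimes> c"
      using JC unfolding set_mult_def by blast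
    have "c \<otimes> h \<otimes> inv c \<in> C"
      using C jc(2) h by (simp add: subgroup.m_closed subgroup.m_inv_closed)
    moreover have "x \<otimes> h \<otimes> inv x = j \<otimes> (c \<otimes> h \<otimes> inv c) \<otimes> inv j"
      using jc h J_carrier C_carrier by (simp add: inv_mult_group m_assoc subsetD)
    ultimately show "x \<otimes> h \<otimes> inv x \<in> C" using J_conj[OF jc(1)] by simp
  qed
qed

lemma (in group) normal_if_prime_index_over_prime_factor:
  assumes fin: "finite (carrier G)" and "Factorial_Ring.prime p"
    and p_min: "\<And>q. Factorial_Ring.prime q \<Longrightarrow> q dvd order G \<Longrightarrow> p \<le> q"
    and C: "subgroup C G" and index: "card (carrier G) = p * card C"
    and J: "J \<lhd> G" and K: "K \<lhd> G" and "K \<subseteq> J" and "K \<subseteq> C" and "\<not> J \<subseteq> C"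
    and prime: "Factorial_Ring.prime (card ((\<lambda>x. K #> x) ` J))"
  shows "C \<lhd> G"
proof (rule normal_if_conj_fixes_rcosets[OF C _ \<open>K \<subseteq> C\<close>])
  show "subgroup J G" using J normal_imp_subgroup by blast
  show "J <#> C = carrier G"
    by (rule normal_mult_eq_carrier_of_prime_index) (use assms in auto)
  have "card ((\<lambda>x. K #> x) ` J) \<le> p"
    using card_prime_factor_le_index[OF fin _ _ C \<open>K \<subseteq> J\<close> \<open>K \<subseteq> C\<close> \<open>\<not> J \<subseteq> C\<close> prime index]
      J K normal_imp_subgroup by blast
  then show "inv h \<otimes> y \<otimes> h \<in> K #> y" if "y \<in> J" "h \<in> C" for y h
    using conj_fixes_rcosets[OF fin J K \<open>K \<subseteq> J\<close> p_min] that subgroup.mem_carrier[OF C] by blast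
qed

locale skew_brace =
  fixes A M :: "'a monoid"
  assumes brace: "brace A M"
begin

sublocale A: group A using brace by (simp add: brace_def)
sublocale M: group M using brace by (simp add: brace_def)

abbreviation lam where "lam \<equiv> brace_lambda A M"

lemma carrier_eq: "carrier M = carrier A"
  using brace by (simp add: brace_def)

lemma distrib:
  "\<lbrakk>a \<in> carrier A; b \<in> carrier A; c \<in> carrier A\<rbrakk> \<Longrightarrow>
   a \<otimes>\<^bsub>M\<^esub> (b \<otimes>\<^bsub>A\<^esub> c) = a \<otimes>\<^bsub>M\<^esub> b \<otimes>\<^bsub>A\<^esub> inv\<^bsub>A\<^esub> a \<otimes>\<^bsub>A\<^esub> (a \<otimes>\<^bsub>M\<^esub> c)"
  using brace by (simp add: brace_def)

lemma M_mult_closed: "\<lbrakk>a \<in> carrier A; b \<in> carrier A\<rbrakk> \<Longrightarrow> a \<otimes>\<^bsub>M\<^esub> b \<in> carrier A"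
  using M.m_closed carrier_eq by simp

lemma one_eq: "\<one>\<^bsub>M\<^esub> = \<one>\<^bsub>A\<^esub>"
proof -
  have one_M: "\<one>\<^bsub>M\<^esub> \<in> carrier A" and one_A: "\<one>\<^bsub>A\<^esub> \<in> carrier M"
    using carrier_eq by auto
  have "\<one>\<^bsub>M\<^esub> \<otimes>\<^bsub>M\<^esub> (\<one>\<^bsub>A\<^esub> \<otimes>\<^bsub>A\<^esub> \<one>\<^bsub>A\<^esub>)
      = \<one>\<^bsub>M\<^esub> \<otimes>\<^bsub>M\<^esub> \<one>\<^bsub>A\<^esub> \<otimes>\<^bsub>A\<^esub> inv\<^bsub>A\<^esub> \<one>\<^bsub>M\<^esub> \<otimes>\<^bsub>A\<^esub> (\<one>\<^bsub>M\<^esub> \<otimes>\<^bsub>M\<^esub> \<one>\<^bsub>A\<^esub>)"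
    using distrib[OF one_M A.one_closed A.one_closed] .
  then have "\<one>\<^bsub>A\<^esub> = inv\<^bsub>A\<^esub> \<one>\<^bsub>M\<^esub>" using one_A one_M by simp
  then show ?thesis using one_M by (metis A.inv_inv A.inv_one)
qed

lemma lambda_closed: "\<lbrakk>a \<in> carrier A; x \<in> carrier A\<rbrakk> \<Longrightarrow> lam a x \<in> carrier A"
  unfolding brace_lambda_def using M_mult_closed by simp

lemma mult_eq_lambda: "\<lbrakk>a \<in> carrier A; x \<in> carrier A\<rbrakk> \<Longrightarrow> a \<otimes>\<^bsub>M\<^esub> x = a \<otimes>\<^bsub>A\<^esub> lam a x"
  unfolding brace_lambda_def using M_mult_closed by (simp add: A.m_assoc[symmetric])

lemma lambda_mult:
  "\<lbrakk>a \<in> carrier A; x \<in> carrier A; y \<in> carrier A\<rbrakk> \<Longrightarrow>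
   lam a (x \<otimes>\<^bsub>A\<^esub> y) = lam a x \<otimes>\<^bsub>A\<^esub> lam a y"
  unfolding brace_lambda_def using distrib M_mult_closed by (simp add: A.m_assoc)

lemma lambda_one: "a \<in> carrier A \<Longrightarrow> lam a \<one>\<^bsub>A\<^esub> = \<one>\<^bsub>A\<^esub>"
  unfolding brace_lambda_def using carrier_eq one_eq[symmetric] by simp

lemma lambda_inv: "\<lbrakk>a \<in> carrier A; x \<in> carrier A\<rbrakk> \<Longrightarrow> lam a (inv\<^bsub>A\<^esub> x) = inv\<^bsub>A\<^esub> (lam a x)"
  using lambda_mult[of a "inv\<^bsub>A\<^esub> x" x] lambda_one lambda_closed A.inv_equality by simp

lemma lambda_compose:
  assumes a: "a \<in> carrier A" and b: "b \<in> carrier A" and x: "x \<in> carrier A"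
  shows "lam a (lam b x) = lam (a \<otimes>\<^bsub>M\<^esub> b) x"
proof -
  have bx: "b \<otimes>\<^bsub>M\<^esub> x \<in> carrier A" and ab: "a \<otimes>\<^bsub>M\<^esub> b \<in> carrier A"
    and abx: "a \<otimes>\<^bsub>M\<^esub> (b \<otimes>\<^bsub>M\<^esub> x) \<in> carrier A"
    using M_mult_closed a b x by auto
  have "lam a (lam b x) = inv\<^bsub>A\<^esub> (lam a b) \<otimes>\<^bsub>A\<^esub> lam a (b \<otimes>\<^bsub>M\<^esub> x)"
    unfolding brace_lambda_def[of A M b] using lambda_mult lambda_inv a b bx by simp
  also have "\<dots> = inv\<^bsub>A\<^esub> (a \<otimes>\<^bsub>M\<^esub> b) \<otimes>\<^bsub>A\<^esub> (a \<otimes>\<^bsub>M\<^esub> (b \<otimes>\<^bsub>M\<^esub> x))"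
    unfolding brace_lambda_def using a ab bx abx
    by (simp add: A.inv_mult_group A.m_assoc) (simp add: A.m_assoc[symmetric])
  also have "\<dots> = lam (a \<otimes>\<^bsub>M\<^esub> b) x"
    unfolding brace_lambda_def using a b x carrier_eq by (simp add: M.m_assoc)
  finally show ?thesis .
qed

lemma lambda_one_left: "x \<in> carrier A \<Longrightarrow> lam \<one>\<^bsub>M\<^esub> x = x"
  unfolding brace_lambda_def using carrier_eq one_eq by (metis A.inv_one A.l_one M.l_one)

lemma lambda_funpow:
  assumes "b \<in> carrier A" and "x \<in> carrier A"
  shows "(lam b ^^ n) x = lam (b [^]\<^bsub>M\<^esub> n) x"
proof (induction n)
  case (Suc n)
  have "b [^]\<^bsub>M\<^esub> n \<in> carrier A" using assms carrier_eq M.nat_pow_closed by auto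
  then have "(lam b ^^ Suc n) x = lam (b \<otimes>\<^bsub>M\<^esub> b [^]\<^bsub>M\<^esub> n) x"
    using Suc assms lambda_compose by simp
  moreover have "b \<in> carrier M" using assms carrier_eq by simp
  ultimately show ?case by (metis M.nat_pow_Suc2)
qed (use assms lambda_one_left in simp)

lemma ideal_rcos_eq:
  assumes I: "brace_ideal A M K" and x: "x \<in> carrier A"
  shows "K #>\<^bsub>M\<^esub> x = K #>\<^bsub>A\<^esub> x"
proof -
  have "K \<lhd> A" "K \<lhd> M" and lam_K: "\<And>b y. b \<in> carrier M \<Longrightarrow> y \<in> K \<Longrightarrow> lam b y \<in> K"
    using I unfolding brace_ideal_def by auto
  then have K_carrier: "K \<subseteq> carrier A"
    using normal_imp_subgroup subgroup.subset by blast
  have "x <#\<^bsub>M\<^esub> K = x <#\<^bsub>A\<^esub> K"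
  proof
    show "x <#\<^bsub>M\<^esub> K \<subseteq> x <#\<^bsub>A\<^esub> K"
    proof
      fix z assume "z \<in> x <#\<^bsub>M\<^esub> K"
      then obtain k where k: "k \<in> K" "z = x \<otimes>\<^bsub>M\<^esub> k" unfolding l_coset_def by blast
      then have "z = x \<otimes>\<^bsub>A\<^esub> lam x k" using mult_eq_lambda x K_carrier by auto
      moreover have "lam x k \<in> K" using lam_K x k(1) carrier_eq by simp
      ultimately show "z \<in> x <#\<^bsub>A\<^esub> K" unfolding l_coset_def by blast
    qed
  next
    show "x <#\<^bsub>A\<^esub> K \<subseteq> x <#\<^bsub>M\<^esub> K"
    proof
      fix z assume "z \<in> x <#\<^bsub>A\<^esub> K"
      then obtain k where k: "k \<in> K" "z = x \<otimes>\<^bsub>A\<^esub> k" unfolding l_coset_def by blast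
      have x_inv: "inv\<^bsub>M\<^esub> x \<in> carrier A" using x carrier_eq by auto
      have k': "lam (inv\<^bsub>M\<^esub> x) k \<in> K" using lam_K x_inv carrier_eq k(1) by simp
      have "x \<otimes>\<^bsub>M\<^esub> lam (inv\<^bsub>M\<^esub> x) k = x \<otimes>\<^bsub>A\<^esub> lam x (lam (inv\<^bsub>M\<^esub> x) k)"
        using mult_eq_lambda x k' K_carrier by auto
      also have "lam x (lam (inv\<^bsub>M\<^esub> x) k) = lam (x \<otimes>\<^bsub>M\<^esub> inv\<^bsub>M\<^esub> x) k"
        using lambda_compose x x_inv k(1) K_carrier by auto
      also have "x \<otimes>\<^bsub>A\<^esub> lam (x \<otimes>\<^bsub>M\<^esub> inv\<^bsub>M\<^esub> x) k = z"
        using lambda_one_left x k K_carrier carrier_eq by auto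
      finally show "z \<in> x <#\<^bsub>M\<^esub> K" using k' unfolding l_coset_def by blast
    qed
  qed
  then show ?thesis
    using normal.coset_eq \<open>K \<lhd> A\<close> \<open>K \<lhd> M\<close> x carrier_eq by metis
qed


lemma lambda_fixes_rcosets:
  assumes fin: "finite (carrier A)"
    and J: "brace_ideal A M J" and K: "brace_ideal A M K" and "K \<subseteq> J"
    and p_min: "\<And>q. Factorial_Ring.prime q \<Longrightarrow> q dvd order A \<Longrightarrow> p \<le> q"
    and card_le: "card ((\<lambda>x. K #>\<^bsub>A\<^esub> x) ` J) \<le> p"
    and b: "b \<in> carrier A" and x: "x \<in> J"
  shows "lam b x \<in> K #>\<^bsub>A\<^esub> x"
proof (rule A.endo_fixes_rcosets[OF fin _ _ \<open>K \<subseteq> J\<close> _ _ _ _ _ p_min card_le x])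
  show "subgroup J A" "subgroup K A"
    using J K by (simp_all add: brace_ideal_def subbrace_def)
  then have J_carrier: "J \<subseteq> carrier A" using subgroup.subset by blast
  show "lam b ` J \<subseteq> J" "lam b ` K \<subseteq> K"
    using J K b carrier_eq by (auto simp: brace_ideal_def)
  show "lam b (y \<otimes>\<^bsub>A\<^esub> z) = lam b y \<otimes>\<^bsub>A\<^esub> lam b z" if "y \<in> J" "z \<in> J" for y z
    using lambda_mult b that J_carrier by blast
  show "(lam b ^^ order A) y = y" if "y \<in> J" for y
  proof -
    have "b [^]\<^bsub>M\<^esub> order A = \<one>\<^bsub>M\<^esub>"
      using M.pow_order_eq_1 b carrier_eq by (simp add: order_def)
    then show ?thesis
      using lambda_funpow lambda_one_left b that J_carrier by (simp add: subsetD)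
  qed
  show "0 < order A" using fin by (simp add: A.order_gt_0_iff_finite)
qed

lemma subbrace_lambda_closed:
  assumes C: "subbrace A M C" and C_A: "C \<lhd> A" and C_M: "C \<lhd> M"
    and "K \<subseteq> C" and JC: "J <#>\<^bsub>M\<^esub> C = carrier M" and J_carrier: "J \<subseteq> carrier A"
    and lambda_J: "\<And>y j. y \<in> C \<Longrightarrow> j \<in> J \<Longrightarrow> lam y j \<in> K #>\<^bsub>A\<^esub> j"
    and b: "b \<in> carrier M" and x: "x \<in> C"
  shows "lam b x \<in> C"
proof -
  have C_sub: "subgroup C A" "subgroup C M" using C by (simp_all add: subbrace_def)
  then have C_carrier: "C \<subseteq> carrier A" using subgroup.subset by blast
  have lambda_C: "lam c y \<in> C" if "c \<in> C" "y \<in> C" for c y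
    unfolding brace_lambda_def
    using that C_sub by (simp add: subgroup.m_closed subgroup.m_inv_closed)
  have lambda_J_C: "lam j y \<in> C" if j: "j \<in> J" and y: "y \<in> C" for j y
  proof -
    \<comment> \<open>j \<cdot> y = y' \<cdot> j = y' + lam y' j with y' in C and lam y' j in K + j\<close>
    have carrier: "j \<in> carrier A" "y \<in> carrier A" using j y J_carrier C_carrier by auto
    define y' where "y' = j \<otimes>\<^bsub>M\<^esub> y \<otimes>\<^bsub>M\<^esub> inv\<^bsub>M\<^esub> j"
    have y': "y' \<in> C"
      unfolding y'_def using normal.inv_op_closed2[OF C_M] carrier y carrier_eq by simp
    then have "y' \<in> carrier A" using C_carrier by blast
    obtain k where k: "k \<in> K" "lam y' j = k \<otimes>\<^bsub>A\<^esub> j"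
      using lambda_J[OF y' j] unfolding r_coset_def by blast
    then have "k \<in> carrier A" using \<open>K \<subseteq> C\<close> C_carrier by blast
    have "j \<in> carrier M" "y \<in> carrier M" using carrier carrier_eq by auto
    then have "j \<otimes>\<^bsub>M\<^esub> y = y' \<otimes>\<^bsub>M\<^esub> j"
      unfolding y'_def by (simp add: M.m_assoc)
    also have "\<dots> = y' \<otimes>\<^bsub>A\<^esub> (k \<otimes>\<^bsub>A\<^esub> j)"
      using mult_eq_lambda \<open>y' \<in> carrier A\<close> carrier k(2) by simp
    finally have "lam j y = inv\<^bsub>A\<^esub> j \<otimes>\<^bsub>A\<^esub> (y' \<otimes>\<^bsub>A\<^esub> k) \<otimes>\<^bsub>A\<^esub> j"
      unfolding brace_lambda_def
      using carrier \<open>y' \<in> carrier A\<close> \<open>k \<in> carrier A\<close> by (simp add: A.m_assoc)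
    moreover have "y' \<otimes>\<^bsub>A\<^esub> k \<in> C"
      using subgroup.m_closed[OF C_sub(1) y'] k(1) \<open>K \<subseteq> C\<close> by blast
    ultimately show ?thesis using normal.inv_op_closed1[OF C_A] carrier by simp
  qed
  obtain j c where jc: "j \<in> J" "c \<in> C" "b = j \<otimes>\<^bsub>M\<^esub> c"
    using b JC unfolding set_mult_def by blast
  moreover have "j \<in> carrier A" "c \<in> carrier A" "x \<in> carrier A"
    using jc x J_carrier C_carrier by auto
  ultimately have "lam b x = lam j (lam c x)" using lambda_compose by simp
  then show ?thesis using lambda_J_C[OF jc(1) lambda_C[OF jc(2) x]] by simp
qed

lemma subbrace_ideal_if_prime_index_over_prime_factor:
  assumes fin: "finite (carrier A)" and p: "Factorial_Ring.prime p"
    and p_min: "\<And>q. Factorial_Ring.prime q \<Longrightarrow> q dvd card (carrier A) \<Longrightarrow> p \<le> q"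
    and C: "subbrace A M C" and index: "card (carrier A) = p * card C"
    and J: "brace_ideal A M J" and K: "brace_ideal A M K"
    and "K \<subseteq> J" and "K \<subseteq> C" and "\<not> J \<subseteq> C"
    and prime: "Factorial_Ring.prime (card ((\<lambda>x. K #>\<^bsub>A\<^esub> x) ` J))"
  shows "brace_ideal A M C"
proof -
  have normal: "J \<lhd> A" "J \<lhd> M" "K \<lhd> A" "K \<lhd> M"
    using J K by (simp_all add: brace_ideal_def)
  have C_sub: "subgroup C A" "subgroup C M" using C by (simp_all add: subbrace_def)
  have J_carrier: "J \<subseteq> carrier A"
    using normal(1) normal_imp_subgroup subgroup.subset by blast
  have fin_M: "finite (carrier M)" and index_M: "card (carrier M) = p * card C"
    and p_min_M: "\<And>q. Factorial_Ring.prime q \<Longrightarrow> q dvd order M \<Longrightarrow> p \<le> q"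
    and p_min_A: "\<And>q. Factorial_Ring.prime q \<Longrightarrow> q dvd order A \<Longrightarrow> p \<le> q"
    using fin index p_min carrier_eq by (simp_all add: order_def)
  have "(\<lambda>x. K #>\<^bsub>M\<^esub> x) ` J = (\<lambda>x. K #>\<^bsub>A\<^esub> x) ` J"
    using ideal_rcos_eq[OF K] J_carrier by (auto intro!: image_cong)
  then have prime_M: "Factorial_Ring.prime (card ((\<lambda>x. K #>\<^bsub>M\<^esub> x) ` J))"
    using prime by simp
  have C_A: "C \<lhd> A"
    using A.normal_if_prime_index_over_prime_factor[OF fin p p_min_A C_sub(1) index]
      normal assms(8-10) prime by blast
  have C_M: "C \<lhd> M"
    using M.normal_if_prime_index_over_prime_factor[OF fin_M p p_min_M C_sub(2) index_M]
      normal assms(8-10) prime_M by blast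
  have JC: "J <#>\<^bsub>M\<^esub> C = carrier M"
    using M.normal_mult_eq_carrier_of_prime_index[OF fin_M p C_sub(2) index_M normal(2)]
      \<open>\<not> J \<subseteq> C\<close> by blast
  have "card ((\<lambda>x. K #>\<^bsub>A\<^esub> x) ` J) \<le> p"
    using A.card_prime_factor_le_index[OF fin _ _ C_sub(1) assms(8-10) prime index]
      normal normal_imp_subgroup by blast
  then have lambda_J: "lam y j \<in> K #>\<^bsub>A\<^esub> j" if "y \<in> C" "j \<in> J" for y j
    using lambda_fixes_rcosets[OF fin J K \<open>K \<subseteq> J\<close> p_min_A _ _ \<open>j \<in> J\<close>]
      subgroup.mem_carrier[OF C_sub(1) \<open>y \<in> C\<close>] by blast
  have "\<forall>b\<in>carrier M. \<forall>x\<in>C. lam b x \<in> C"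
    using subbrace_lambda_closed[OF C C_A C_M \<open>K \<subseteq> C\<close> JC J_carrier lambda_J] by blast
  then show ?thesis using C C_A C_M by (simp add: brace_ideal_def)
qed

end


lemma supersoluble_prime_factor_leaving_subgroup:
  assumes "supersoluble_brace A M" and "finite (carrier A)"
    and "subgroup C A" and "C \<noteq> carrier A"
  obtains J K where "brace_ideal A M J" and "brace_ideal A M K" and "K \<subseteq> J"
    and "K \<subseteq> C" and "\<not> J \<subseteq> C" and "Factorial_Ring.prime (card ((\<lambda>x. K #>\<^bsub>A\<^esub> x) ` J))"
proof -
  obtain I n where "I 0 = {\<one>\<^bsub>A\<^esub>}" and "I n = carrier A"
    and ideals: "\<forall>i\<le>n. brace_ideal A M (I i)"
    and steps: "\<forall>i<n. I i \<subseteq> I (Suc i) \<and>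
           ((infinite_cyclic_in (A Mod (I i)) (brace_factor A (I (Suc i)) (I i)) \<and>
             brace_factor A (I (Suc i)) (I i) \<subseteq> brace_socle (A Mod (I i)) (M Mod (I i)))
            \<or> Factorial_Ring.prime (card (brace_factor A (I (Suc i)) (I i))))"
    using assms(1) unfolding supersoluble_brace_def by blast
  have "I 0 \<subseteq> C" using \<open>I 0 = _\<close> assms(3) by (simp add: subgroup.one_closed)
  moreover have "\<not> I n \<subseteq> C"
    using \<open>I n = carrier A\<close> assms(3,4) subgroup.subset by blast
  ultimately obtain i where "i < n" "I i \<subseteq> C" "\<not> I (Suc i) \<subseteq> C"
    using ex_least_nat_less[of "\<lambda>i. \<not> I i \<subseteq> C" n] by auto
  moreover have "finite (brace_factor A (I (Suc i)) (I i))"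
    using assms(2) ideals \<open>i < n\<close> subgroup.subset finite_subset
    unfolding brace_factor_def brace_ideal_def subbrace_def
    by (metis Suc_leI finite_imageI)
  ultimately show ?thesis
    using that ideals steps unfolding brace_factor_def infinite_cyclic_in_def
    by (metis Suc_leI less_imp_le_nat)
qed

theorem theorem3p22:
  fixes A M :: "'a monoid" and C :: "'a set" and p :: nat
  assumes "supersoluble_brace A M"
    and "finite (carrier A)"
    and "Factorial_Ring.prime p" and "p dvd card (carrier A)"
    and "\<forall>q. Factorial_Ring.prime q \<and> q dvd card (carrier A) \<longrightarrow> p \<le> q"
    and "subbrace A M C"
    and "card (carrier A) = p * card C"
  shows "brace_ideal A M C"
proof -
  interpret skew_brace A M
    using assms(1) by (simp add: skew_brace_def supersoluble_brace_def)
  have "subgroup C A" using assms(6) by (simp add: subbrace_def)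
  moreover have "C \<noteq> carrier A"
    using assms(2,3,7) A.order_gt_0_iff_finite by (auto simp: order_def)
  ultimately obtain J K where "brace_ideal A M J" "brace_ideal A M K" "K \<subseteq> J" "K \<subseteq> C"
    "\<not> J \<subseteq> C" "Factorial_Ring.prime (card ((\<lambda>x. K #>\<^bsub>A\<^esub> x) ` J))"
    using supersoluble_prime_factor_leaving_subgroup[OF assms(1,2)] by metis
  then show ?thesis
    using subbrace_ideal_if_prime_index_over_prime_factor[OF assms(2,3) _ assms(6,7)] assms(5)
    by blast
qed

end
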